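(* Let $(X,\le,\ast)$ be a semiframe and $F\subseteq X$ a semifilter. Then $F$ is regular if and only if $F$ is weakly regular and strongly compatible.
   Context: A semiframe is a triple $(X,\le,\ast)$ where $(X,\le)$ is a complete join-semilattice ($\bot_X=\bigvee\varnothing$) and $\ast$ is a compatibility relation: commutative; $x\ast x$ for every $x\neq\bot_X$; and $x\ast\bigvee Y$ iff $x\ast y$ for some $y\in Y$. A semifilter is a nonempty, up-closed subset $F$ with $y\ast y'$ for all $y,y'\in F$ (compatible). For $F\subseteq X$ write $x\ast F$ when $x\ast y$ for all $y\in F$, and $F^\ast=\{x\in X\mid x\ast F\}$. $F$ is strongly compatible when $F^\ast$ is nonempty and compatible. An element $x$ is transitive when $x\neq\bot_X$ and $x'\ast x\ast x''$ implies $x'\ast x''$. The abstract community of $F$ is $\mathcal K(F)=\bigvee\{z\in X\mid \neg(z\ast c_F)\}$ where $c_F=\bigvee\{y\in X\mid \neg(y\ast F)\}$ (equivalently $\mathcal K(F)=\bigvee\{x\in X\mid x^\ast\subseteq F^\ast\}$ with $x^\ast=\{x'\mid x'\ast x\}$). $F$ is weakly regular when $\mathcal K(F)\in F$, and regular when $\mathcal K(F)\in F$ and $\mathcal K(F)$ is transitive. *)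

theory Defs
  imports Main
begin

text \<open>A semiframe on a carrier type 'a: the order is a complete join-semilattice,
which (having all joins) is a complete lattice; bottom is Sup {}.  The
compatibility relation is a binary predicate cmp.\<close>

definition semiframe :: "('a::complete_lattice \<Rightarrow> 'a \<Rightarrow> bool) \<Rightarrow> bool" where
  "semiframe cmp \<longleftrightarrow>
     (\<forall>x y. cmp x y \<longleftrightarrow> cmp y x) \<and>
     (\<forall>x. x \<noteq> Sup {} \<longrightarrow> cmp x x) \<and>
     (\<forall>x Y. cmp x (Sup Y) \<longleftrightarrow> (\<exists>y\<in>Y. cmp x y))"

definition compatible_set :: "('a \<Rightarrow> 'a \<Rightarrow> bool) \<Rightarrow> 'a set \<Rightarrow> bool" where
  "compatible_set cmp F \<longleftrightarrow> (\<forall>y\<in>F. \<forall>y'\<in>F. cmp y y')"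

definition semifilter :: "('a::complete_lattice \<Rightarrow> 'a \<Rightarrow> bool) \<Rightarrow> 'a set \<Rightarrow> bool" where
  "semifilter cmp F \<longleftrightarrow>
     F \<noteq> {} \<and> (\<forall>x y. x \<in> F \<longrightarrow> x \<le> y \<longrightarrow> y \<in> F) \<and> compatible_set cmp F"

definition comp_with_set :: "('a \<Rightarrow> 'a \<Rightarrow> bool) \<Rightarrow> 'a \<Rightarrow> 'a set \<Rightarrow> bool" where
  "comp_with_set cmp x F \<longleftrightarrow> (\<forall>y\<in>F. cmp x y)"

definition star_set :: "('a \<Rightarrow> 'a \<Rightarrow> bool) \<Rightarrow> 'a set \<Rightarrow> 'a set" where
  "star_set cmp F = {x. comp_with_set cmp x F}"

definition strongly_compatible :: "('a \<Rightarrow> 'a \<Rightarrow> bool) \<Rightarrow> 'a set \<Rightarrow> bool" where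
  "strongly_compatible cmp F \<longleftrightarrow>
     star_set cmp F \<noteq> {} \<and> compatible_set cmp (star_set cmp F)"

definition transitive_elem :: "('a::complete_lattice \<Rightarrow> 'a \<Rightarrow> bool) \<Rightarrow> 'a \<Rightarrow> bool" where
  "transitive_elem cmp x \<longleftrightarrow>
     x \<noteq> Sup {} \<and> (\<forall>x' x''. cmp x' x \<and> cmp x x'' \<longrightarrow> cmp x' x'')"

definition cF :: "('a::complete_lattice \<Rightarrow> 'a \<Rightarrow> bool) \<Rightarrow> 'a set \<Rightarrow> 'a" where
  "cF cmp F = Sup {y. \<not> comp_with_set cmp y F}"

definition community :: "('a::complete_lattice \<Rightarrow> 'a \<Rightarrow> bool) \<Rightarrow> 'a set \<Rightarrow> 'a" where
  "community cmp F = Sup {z. \<not> cmp z (cF cmp F)}"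

definition weakly_regular :: "('a::complete_lattice \<Rightarrow> 'a \<Rightarrow> bool) \<Rightarrow> 'a set \<Rightarrow> bool" where
  "weakly_regular cmp F \<longleftrightarrow> community cmp F \<in> F"

definition regular :: "('a::complete_lattice \<Rightarrow> 'a \<Rightarrow> bool) \<Rightarrow> 'a set \<Rightarrow> bool" where
  "regular cmp F \<longleftrightarrow> community cmp F \<in> F \<and> transitive_elem cmp (community cmp F)"

end

theory Submission
  imports Defs
begin

text \<open>Everything compatible with the community \<open>K(F)\<close> is compatible with all of \<open>F\<close>,
and a compatible \<open>F\<close> lies in its own \<open>F\<^sup>*\<close>.  Hence if \<open>K(F) \<in> F\<close> is transitive, any two
elements of \<open>F\<^sup>*\<close> are compatible through \<open>K(F)\<close>; conversely, if \<open>F\<^sup>*\<close> is compatible,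
then two elements compatible with \<open>K(F)\<close> both lie in \<open>F\<^sup>*\<close>, so \<open>K(F)\<close> is transitive.\<close>

lemma semiframe_cmp_commute: "semiframe cmp \<Longrightarrow> cmp x y \<longleftrightarrow> cmp y x"
  unfolding semiframe_def by metis

lemma semiframe_cmp_Sup_iff: "semiframe cmp \<Longrightarrow> cmp x (Sup Y) \<longleftrightarrow> (\<exists>y\<in>Y. cmp x y)"
  unfolding semiframe_def by metis

lemma semiframe_not_cmp_bot: "semiframe cmp \<Longrightarrow> \<not> cmp x (Sup {})"
  using semiframe_cmp_Sup_iff[of cmp x "{}"] by simp

lemma compatible_set_subset_star_set: "compatible_set cmp F \<Longrightarrow> F \<subseteq> star_set cmp F"
  unfolding compatible_set_def star_set_def comp_with_set_def by blast

lemma cmp_community_imp_in_star_set: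
  assumes sf: "semiframe cmp" and w: "cmp w (community cmp F)"
  shows "w \<in> star_set cmp F"
proof -
  from w obtain z where z: "\<not> cmp z (cF cmp F)" and wz: "cmp w z"
    unfolding community_def by (auto simp: semiframe_cmp_Sup_iff[OF sf])
  have "comp_with_set cmp w F"
  proof (rule ccontr)
    assume "\<not> comp_with_set cmp w F"
    then have "cmp z (cF cmp F)"
      using wz semiframe_cmp_commute[OF sf]
      unfolding cF_def by (auto simp: semiframe_cmp_Sup_iff[OF sf])
    with z show False by simp
  qed
  then show ?thesis unfolding star_set_def by simp
qed

lemma strongly_compatible_if_transitive_member:
  assumes sf: "semiframe cmp" and F: "compatible_set cmp F"
    and xF: "x \<in> F" and tr: "transitive_elem cmp x"
  shows "strongly_compatible cmp F"
proof -
  have "x \<in> star_set cmp F"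
    using xF compatible_set_subset_star_set[OF F] by blast
  moreover have "compatible_set cmp (star_set cmp F)"
    unfolding compatible_set_def
  proof (intro ballI)
    fix y y' assume "y \<in> star_set cmp F" and "y' \<in> star_set cmp F"
    with xF have "cmp y x" and "cmp x y'"
      using semiframe_cmp_commute[OF sf] unfolding star_set_def comp_with_set_def by auto
    with tr show "cmp y y'" unfolding transitive_elem_def by blast
  qed
  ultimately show ?thesis unfolding strongly_compatible_def by blast
qed

lemma transitive_community_if_compatible_star_set:
  assumes sf: "semiframe cmp" and star: "compatible_set cmp (star_set cmp F)"
    and self: "cmp (community cmp F) (community cmp F)"
  shows "transitive_elem cmp (community cmp F)"
  unfolding transitive_elem_def
proof (intro conjI allI impI)
  show "community cmp F \<noteq> Sup {}"
    using self semiframe_not_cmp_bot[OF sf] by metis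
next
  fix y y' assume "cmp y (community cmp F) \<and> cmp (community cmp F) y'"
  then have "y \<in> star_set cmp F" and "y' \<in> star_set cmp F"
    using cmp_community_imp_in_star_set[OF sf] semiframe_cmp_commute[OF sf] by metis+
  with star show "cmp y y'" unfolding compatible_set_def by blast
qed

theorem theorem9p29:
  fixes cmp :: "'a::complete_lattice \<Rightarrow> 'a \<Rightarrow> bool"
    and F :: "'a set"
  assumes "semiframe cmp"
    and "semifilter cmp F"
  shows "regular cmp F \<longleftrightarrow> weakly_regular cmp F \<and> strongly_compatible cmp F"
proof -
  have F: "compatible_set cmp F" using assms(2) unfolding semifilter_def by simp
  show ?thesis
  proof
    assume "regular cmp F"
    then show "weakly_regular cmp F \<and> strongly_compatible cmp F"
      using strongly_compatible_if_transitive_member[OF assms(1) F]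
      unfolding regular_def weakly_regular_def by blast
  next
    assume wr_sc: "weakly_regular cmp F \<and> strongly_compatible cmp F"
    then have "community cmp F \<in> F" unfolding weakly_regular_def by simp
    with F have "cmp (community cmp F) (community cmp F)" unfolding compatible_set_def by blast
    with wr_sc show "regular cmp F"
      using transitive_community_if_compatible_star_set[OF assms(1)]
      unfolding regular_def weakly_regular_def strongly_compatible_def by blast
  qed
qed

end
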